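(* Let $M$ be a monotone triangle with $n$ rows and strictly increasing bottom row. Then the sum of the weights $\mathrm{W}(A)$ over all arrowed monotone triangles $A$ whose underlying monotone triangle (forgetting decorations) is $M$ equals $\prod_{i=1}^n(uX_i+vX_i^{-1}+w)\cdot\mathrm{W}_0(M)$.
   Context: Monotone triangle: array $(m_{i,j})_{1\le j\le i\le n}$ of integers with $m_{i+1,j}\le m_{i,j}\le m_{i+1,j+1}$, $m_{i,j}<m_{i,j+1}$. Northwest/northeast-neighbours of $m_{i,j}$: $m_{i-1,j-1}$, $m_{i-1,j}$. An arrowed monotone triangle decorates every entry by one of $\nwarrow,\nearrow,\nwarrow\!\nearrow$ such that an entry equal to its northwest-neighbour carries $\nearrow$ and an entry equal to its northeast-neighbour carries $\nwarrow$; its weight is $\mathrm{W}(A)=u^{\#\nearrow}v^{\#\nwarrow}w^{\#\nwarrow\nearrow}\prod_iX_i^{(\text{sum of row }i)-(\text{sum of row }i-1)+(\#\nearrow\text{ in row }i)-(\#\nwarrow\text{ in row }i)}$ (sum of row $0$ is $0$). For $M$, an entry $m_{i,j}$ with $i<n$ is special if $m_{i+1,j}<m_{i,j}<m_{i+1,j+1}$, left-leaning if $m_{i,j}=m_{i+1,j}$, right-leaning if $m_{i,j}=m_{i+1,j+1}$; $s_i,l_i,r_i$ count these in row $i$, $s_0=l_0=r_0=0$, $l(M)=\sum l_i$, $r(M)=\sum r_i$, $d_i(M)=\sum_j m_{i,j}-\sum_j m_{i-1,j}+r_{i-1}-l_{i-1}$, and $\mathrm{W}_0(M)=u^{r(M)}v^{l(M)}\prod_iX_i^{d_i(M)}(w+uX_i+vX_i^{-1})^{s_{i-1}(M)}$.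 *)

theory Defs
  imports Main
begin

text \<open>A triangle is a function m :: nat => nat => int; entry (i,j) with 1 <= j <= i <= n.\<close>

definition monotone_triangle :: "nat \<Rightarrow> (nat \<Rightarrow> nat \<Rightarrow> int) \<Rightarrow> bool" where
  "monotone_triangle n m \<longleftrightarrow>
     (\<forall>i j. 1 \<le> j \<and> j < i \<and> i \<le> n \<longrightarrow> m i j < m i (j+1)) \<and>
     (\<forall>i j. 1 \<le> j \<and> j \<le> i \<and> i < n \<longrightarrow> m (i+1) j \<le> m i j \<and> m i j \<le> m (i+1) (j+1))"

datatype arrow = NW | NE | NWNE

text \<open>Decorations: NW = nwarrow, NE = nearrow, NWNE = both.
  Northwest neighbour of (i,j) is (i-1,j-1) (exists iff j >= 2), northeast neighbour is (i-1,j) (exists iff j <= i-1).\<close>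

definition arrow_compatible :: "nat \<Rightarrow> (nat \<Rightarrow> nat \<Rightarrow> int) \<Rightarrow> (nat \<Rightarrow> nat \<Rightarrow> arrow) \<Rightarrow> bool" where
  "arrow_compatible n m d \<longleftrightarrow>
     (\<forall>i j. 1 \<le> j \<and> j \<le> i \<and> i \<le> n \<longrightarrow>
        (2 \<le> j \<and> m i j = m (i-1) (j-1) \<longrightarrow> d i j = NE) \<and>
        (j + 1 \<le> i \<and> m i j = m (i-1) j \<longrightarrow> d i j = NW))"

text \<open>Arrowed monotone triangles with underlying triangle m: decorations on the index range,
  normalised to NWNE outside it (so that they are in bijection with decorations of the entries).\<close>
definition arrowings :: "nat \<Rightarrow> (nat \<Rightarrow> nat \<Rightarrow> int) \<Rightarrow> (nat \<Rightarrow> nat \<Rightarrow> arrow) set" where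
  "arrowings n m = {d. arrow_compatible n m d \<and>
      (\<forall>i j. \<not> (1 \<le> j \<and> j \<le> i \<and> i \<le> n) \<longrightarrow> d i j = NWNE)}"

definition row_sum :: "(nat \<Rightarrow> nat \<Rightarrow> int) \<Rightarrow> nat \<Rightarrow> int" where
  "row_sum m i = (\<Sum>j = 1..i. m i j)"

definition arrow_count :: "nat \<Rightarrow> (nat \<Rightarrow> nat \<Rightarrow> arrow) \<Rightarrow> arrow \<Rightarrow> nat" where
  "arrow_count n d a = card {(i, j). 1 \<le> j \<and> j \<le> i \<and> i \<le> n \<and> d i j = a}"

definition arrow_count_row :: "nat \<Rightarrow> (nat \<Rightarrow> nat \<Rightarrow> arrow) \<Rightarrow> arrow \<Rightarrow> nat" where
  "arrow_count_row i d a = card {j. 1 \<le> j \<and> j \<le> i \<and> d i j = a}"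

definition W :: "'a::field \<Rightarrow> 'a \<Rightarrow> 'a \<Rightarrow> (nat \<Rightarrow> 'a) \<Rightarrow> nat \<Rightarrow> (nat \<Rightarrow> nat \<Rightarrow> int)
                  \<Rightarrow> (nat \<Rightarrow> nat \<Rightarrow> arrow) \<Rightarrow> 'a" where
  "W u v w X n m d =
     u ^ arrow_count n d NE * v ^ arrow_count n d NW * w ^ arrow_count n d NWNE *
     (\<Prod>i = 1..n. X i powi (row_sum m i - row_sum m (i-1)
                      + int (arrow_count_row i d NE) - int (arrow_count_row i d NW)))"

text \<open>Special / left-leaning / right-leaning counts of row i (meaningful for i < n; row 0 gives 0).\<close>
definition special_count :: "(nat \<Rightarrow> nat \<Rightarrow> int) \<Rightarrow> nat \<Rightarrow> nat" where
  "special_count m i = card {j. 1 \<le> j \<and> j \<le> i \<and> m (i+1) j < m i j \<and> m i j < m (i+1) (j+1)}"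

definition left_count :: "(nat \<Rightarrow> nat \<Rightarrow> int) \<Rightarrow> nat \<Rightarrow> nat" where
  "left_count m i = card {j. 1 \<le> j \<and> j \<le> i \<and> m i j = m (i+1) j}"

definition right_count :: "(nat \<Rightarrow> nat \<Rightarrow> int) \<Rightarrow> nat \<Rightarrow> nat" where
  "right_count m i = card {j. 1 \<le> j \<and> j \<le> i \<and> m i j = m (i+1) (j+1)}"

definition d_exp :: "(nat \<Rightarrow> nat \<Rightarrow> int) \<Rightarrow> nat \<Rightarrow> int" where
  "d_exp m i = row_sum m i - row_sum m (i-1) + int (right_count m (i-1)) - int (left_count m (i-1))"

definition W0 :: "'a::field \<Rightarrow> 'a \<Rightarrow> 'a \<Rightarrow> (nat \<Rightarrow> 'a) \<Rightarrow> nat \<Rightarrow> (nat \<Rightarrow> nat \<Rightarrow> int) \<Rightarrow> 'a" where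
  "W0 u v w X n m =
     u ^ (\<Sum>i = 1..<n. right_count m i) * v ^ (\<Sum>i = 1..<n. left_count m i) *
     (\<Prod>i = 1..n. X i powi d_exp m i *
        (w + u * X i + v * inverse (X i)) ^ special_count m (i-1))"

end

theory Submission
  imports Defs "HOL-Library.FuncSet"
begin

text \<open>The weight of an arrowed triangle factors into a part depending only on the row sums of M
  and a product of independent local factors, one per entry: u X_i for \<nearrow>, v X_i^-1 for \<nwarrow>
  and w for \<nwarrow>\<nearrow>. Summing over all admissible decorations therefore gives a product over the
  entries of the sum of their admissible local factors. An entry equal to its northwest neighbour
  (i.e. below a right-leaning entry) is forced to \<nearrow>, one equal to its northeast neighbour (below
  a left-leaning entry) is forced to \<nwarrow>, and strictness of the rows rules out both at once. The
  remaining entries of row i are free and contribute u X_i + v X_i^-1 + w each; since every entry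
  of row i-1 is special, left- or right-leaning, there are s_(i-1) + 1 of them.\<close>

lemma UNIV_arrow: "(UNIV :: arrow set) = {NW, NE, NWNE}"
  using arrow.exhaust by auto

lemma finite_arrow_set [simp]: "finite (A :: arrow set)"
  using finite_subset[OF subset_UNIV, of A] by (simp add: UNIV_arrow)

lemma prod_if_eq_power_card:
  assumes "finite A"
  shows "(\<Prod>x\<in>A. if P x then (c::'a::comm_monoid_mult) else 1) = c ^ card {x\<in>A. P x}"
  using assms by (simp add: prod.inter_filter[symmetric])

lemma card_partition3:
  assumes "finite A"
    and "\<And>x. x \<in> A \<Longrightarrow> (P x \<or> Q x \<or> R x) \<and> \<not> (P x \<and> Q x) \<and> \<not> (P x \<and> R x) \<and> \<not> (Q x \<and> R x)"
  shows "card {x\<in>A. P x} + card {x\<in>A. Q x} + card {x\<in>A. R x} = card A"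
proof -
  have "A = {x\<in>A. P x} \<union> {x\<in>A. Q x} \<union> {x\<in>A. R x}" using assms(2) by blast
  also have "card \<dots> = card ({x\<in>A. P x} \<union> {x\<in>A. Q x}) + card {x\<in>A. R x}"
    by (rule card_Un_disjoint) (use assms in auto)
  also have "card ({x\<in>A. P x} \<union> {x\<in>A. Q x}) = card {x\<in>A. P x} + card {x\<in>A. Q x}"
    by (rule card_Un_disjoint) (use assms in auto)
  finally show ?thesis by simp
qed

lemma prod_if3_eq_powers:
  assumes "finite A" and "\<And>x. x \<in> A \<Longrightarrow> \<not> (P x \<and> Q x)"
  shows "(\<Prod>x\<in>A. if P x then (a::'a::comm_monoid_mult) else if Q x then b else c)
     = a ^ card {x\<in>A. P x} * b ^ card {x\<in>A. Q x} * c ^ card {x\<in>A. \<not> P x \<and> \<not> Q x}"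
proof -
  have "(\<Prod>x\<in>A. if P x then a else if Q x then b else c) =
     (\<Prod>x\<in>A. (if P x then a else 1) * (if Q x then b else 1) * (if \<not> P x \<and> \<not> Q x then c else 1))"
    using assms(2) by (intro prod.cong) auto
  also have "\<dots> = a ^ card {x\<in>A. P x} * b ^ card {x\<in>A. Q x} * c ^ card {x\<in>A. \<not> P x \<and> \<not> Q x}"
    using assms(1) by (simp add: prod.distrib prod_if_eq_power_card)
  finally show ?thesis .
qed

lemma sum_shift_pred: "f 0 = (0::nat) \<Longrightarrow> (\<Sum>i = 1..(n::nat). f (i - 1)) = (\<Sum>i = 1..<n. f i)"
  by (induction n) (auto simp: Suc_le_eq)

lemma monotone_triangle_row_strict:
  "monotone_triangle n m \<Longrightarrow> 1 \<le> j \<Longrightarrow> j < i \<Longrightarrow> i \<le> n \<Longrightarrow> m i j < m i (j+1)"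
  unfolding monotone_triangle_def by blast

lemma monotone_triangle_interlacing:
  "monotone_triangle n m \<Longrightarrow> 1 \<le> j \<Longrightarrow> j \<le> i \<Longrightarrow> i < n \<Longrightarrow> m (i+1) j \<le> m i j \<and> m i j \<le> m (i+1) (j+1)"
  unfolding monotone_triangle_def by blast

definition triangle_index :: "nat \<Rightarrow> (nat \<times> nat) set" where
  "triangle_index n = {(i, j). 1 \<le> j \<and> j \<le> i \<and> i \<le> n}"

lemma triangle_index_Sigma: "triangle_index n = Sigma {1..n} (\<lambda>i. {1..i})"
  unfolding triangle_index_def by auto

lemma finite_triangle_index [simp]: "finite (triangle_index n)"
  unfolding triangle_index_Sigma by auto

definition arrow_weight :: "'a::field \<Rightarrow> 'a \<Rightarrow> 'a \<Rightarrow> 'a \<Rightarrow> arrow \<Rightarrow> 'a" where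
  "arrow_weight u v w x a = (case a of NE \<Rightarrow> u * x | NW \<Rightarrow> v * inverse x | NWNE \<Rightarrow> w)"

lemma prod_row_arrow_power:
  "(\<Prod>i = 1..n. Y i ^ arrow_count_row i d a)
     = (\<Prod>(i, j)\<in>triangle_index n. if d i j = a then Y i else 1)"
proof -
  have "(\<Prod>i = 1..n. Y i ^ arrow_count_row i d a) = (\<Prod>i = 1..n. \<Prod>j = 1..i. if d i j = a then Y i else 1)"
    by (intro prod.cong refl) (simp add: prod_if_eq_power_card arrow_count_row_def)
  also have "\<dots> = (\<Prod>(i, j)\<in>triangle_index n. if d i j = a then Y i else 1)"
    unfolding triangle_index_Sigma by (rule prod.Sigma) auto
  finally show ?thesis .
qed

lemma power_arrow_count:
  "c ^ arrow_count n d a = (\<Prod>(i, j)\<in>triangle_index n. if d i j = a then c else 1)"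
proof -
  have "arrow_count n d a = card {p\<in>triangle_index n. d (fst p) (snd p) = a}"
    unfolding arrow_count_def triangle_index_def by (rule arg_cong[where f = card]) auto
  then show ?thesis
    by (simp add: prod_if_eq_power_card case_prod_beta)
qed

lemma W_eq_prod_arrow_weight:
  fixes u v w :: "'a::field"
  assumes "\<forall>i\<in>{1..n}. X i \<noteq> 0"
  shows "W u v w X n m d = (\<Prod>i = 1..n. X i powi (row_sum m i - row_sum m (i-1))) *
           (\<Prod>(i, j)\<in>triangle_index n. arrow_weight u v w (X i) (d i j))"
proof -
  let ?C = "\<Prod>i = 1..n. X i powi (row_sum m i - row_sum m (i-1))"
  let ?ind = "\<lambda>a c i j. if d i j = a then c else 1"
  have "(\<Prod>i = 1..n. X i powi (row_sum m i - row_sum m (i-1)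
            + int (arrow_count_row i d NE) - int (arrow_count_row i d NW)))
      = (\<Prod>i = 1..n. X i powi (row_sum m i - row_sum m (i-1)) *
            (X i ^ arrow_count_row i d NE * inverse (X i) ^ arrow_count_row i d NW))"
    using assms by (intro prod.cong refl)
      (simp add: power_int_add power_int_diff divide_inverse power_inverse)
  also have "\<dots> = ?C * ((\<Prod>(i, j)\<in>triangle_index n. ?ind NE (X i) i j) *
                         (\<Prod>(i, j)\<in>triangle_index n. ?ind NW (inverse (X i)) i j))"
    by (simp only: prod.distrib prod_row_arrow_power)
  finally have "W u v w X n m d = ?C *
      ((\<Prod>(i, j)\<in>triangle_index n. ?ind NE u i j) * (\<Prod>(i, j)\<in>triangle_index n. ?ind NW v i j) *
       (\<Prod>(i, j)\<in>triangle_index n. ?ind NWNE w i j) *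
       (\<Prod>(i, j)\<in>triangle_index n. ?ind NE (X i) i j) *
       (\<Prod>(i, j)\<in>triangle_index n. ?ind NW (inverse (X i)) i j))"
    unfolding W_def power_arrow_count by (simp add: ac_simps)
  also have "\<dots> = ?C * (\<Prod>(i, j)\<in>triangle_index n. arrow_weight u v w (X i) (d i j))"
    unfolding prod.distrib[symmetric]
    by (intro arg_cong[where f = "\<lambda>z. ?C * z"] prod.cong refl)
      (auto simp: arrow_weight_def split: arrow.split)
  finally show ?thesis .
qed

definition allowed_arrows :: "(nat \<Rightarrow> nat \<Rightarrow> int) \<Rightarrow> nat \<Rightarrow> nat \<Rightarrow> arrow set" where
  "allowed_arrows m i j =
     {a. (2 \<le> j \<and> m i j = m (i-1) (j-1) \<longrightarrow> a = NE) \<and> (j + 1 \<le> i \<and> m i j = m (i-1) j \<longrightarrow> a = NW)}"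

lemma arrowings_eq:
  "arrowings n m = {d. (\<forall>i j. (i, j) \<in> triangle_index n \<longrightarrow> d i j \<in> allowed_arrows m i j) \<and>
                       (\<forall>i j. (i, j) \<notin> triangle_index n \<longrightarrow> d i j = NWNE)}"
  unfolding arrowings_def arrow_compatible_def triangle_index_def allowed_arrows_def by auto

lemma sum_arrowings_prod:
  fixes f :: "nat \<Rightarrow> nat \<Rightarrow> arrow \<Rightarrow> 'a::comm_semiring_1"
  shows "(\<Sum>d\<in>arrowings n m. \<Prod>(i, j)\<in>triangle_index n. f i j (d i j))
       = (\<Prod>(i, j)\<in>triangle_index n. \<Sum>a\<in>allowed_arrows m i j. f i j a)"
proof -
  let ?I = "triangle_index n" and ?A = "\<lambda>(i, j). allowed_arrows m i j"
  have "(\<Sum>d\<in>arrowings n m. \<Prod>(i, j)\<in>?I. f i j (d i j)) = (\<Sum>e\<in>PiE ?I ?A. \<Prod>(i, j)\<in>?I. f i j (e (i, j)))"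
  proof (rule sum.reindex_bij_witness[of _ "\<lambda>e i j. if (i, j) \<in> ?I then e (i, j) else NWNE"
                                           "\<lambda>d p. if p \<in> ?I then case_prod d p else undefined"])
    fix d assume d: "d \<in> arrowings n m"
    then show "(\<lambda>i j. if (i, j) \<in> ?I then (if (i, j) \<in> ?I then case_prod d (i, j) else undefined) else NWNE) = d"
      unfolding arrowings_eq by (auto intro!: ext)
    show "(\<lambda>p. if p \<in> ?I then case_prod d p else undefined) \<in> PiE ?I ?A"
      using d unfolding arrowings_eq PiE_def extensional_def by auto
    show "(\<Prod>(i, j)\<in>?I. f i j ((\<lambda>p. if p \<in> ?I then case_prod d p else undefined) (i, j)))
        = (\<Prod>(i, j)\<in>?I. f i j (d i j))"
      by (intro prod.cong) auto
  next
    fix e assume e: "e \<in> PiE ?I ?A"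
    then show "(\<lambda>p. if p \<in> ?I then case_prod (\<lambda>i j. if (i, j) \<in> ?I then e (i, j) else NWNE) p else undefined) = e"
      unfolding PiE_def extensional_def by (auto intro!: ext)
    show "(\<lambda>i j. if (i, j) \<in> ?I then e (i, j) else NWNE) \<in> arrowings n m"
      using e unfolding arrowings_eq PiE_def by auto
  qed
  also have "\<dots> = (\<Prod>p\<in>?I. \<Sum>a\<in>?A p. f (fst p) (snd p) a)"
    by (subst prod_sum_PiE) (auto simp: case_prod_beta)
  finally show ?thesis by (simp add: case_prod_beta)
qed

lemma sum_allowed_arrow_weight:
  assumes "2 \<le> j \<Longrightarrow> j + 1 \<le> i \<Longrightarrow> m (i-1) (j-1) < m (i-1) j"
  shows "(\<Sum>a\<in>allowed_arrows m i j. arrow_weight u v w x a) =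
           (if 2 \<le> j \<and> m i j = m (i-1) (j-1) then u * x
            else if j + 1 \<le> i \<and> m i j = m (i-1) j then v * inverse x
            else u * x + v * inverse x + w)"
proof -
  consider "2 \<le> j \<and> m i j = m (i-1) (j-1)" "\<not> (j + 1 \<le> i \<and> m i j = m (i-1) j)"
    | "\<not> (2 \<le> j \<and> m i j = m (i-1) (j-1))" "j + 1 \<le> i \<and> m i j = m (i-1) j"
    | "\<not> (2 \<le> j \<and> m i j = m (i-1) (j-1))" "\<not> (j + 1 \<le> i \<and> m i j = m (i-1) j)"
    using assms by fastforce
  then show ?thesis
  proof cases
    case 1
    then have "allowed_arrows m i j = {NE}" unfolding allowed_arrows_def by auto
    then show ?thesis unfolding if_P[OF 1(1)] by (simp add: arrow_weight_def)
  next
    case 2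
    then have "allowed_arrows m i j = {NW}" unfolding allowed_arrows_def by auto
    then show ?thesis unfolding if_not_P[OF 2(1)] if_P[OF 2(2)] by (simp add: arrow_weight_def)
  next
    case 3
    then have "allowed_arrows m i j = {NW, NE, NWNE}"
      unfolding allowed_arrows_def by (auto simp: UNIV_arrow[symmetric])
    then show ?thesis unfolding if_not_P[OF 3(1)] if_not_P[OF 3(2)] by (simp add: arrow_weight_def ac_simps)
  qed
qed

lemma card_forced_NE_row:
  assumes "1 \<le> i"
  shows "card {j\<in>{1..i}. 2 \<le> j \<and> m i j = m (i-1) (j-1)} = right_count m (i-1)"
proof -
  have "{j\<in>{1..i}. 2 \<le> j \<and> m i j = m (i-1) (j-1)} = Suc ` {k. 1 \<le> k \<and> k \<le> i - 1 \<and> m (i-1) k = m (i-1+1) (k+1)}"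
  proof (intro equalityI subsetI)
    fix j assume "j \<in> {j\<in>{1..i}. 2 \<le> j \<and> m i j = m (i-1) (j-1)}"
    then show "j \<in> Suc ` {k. 1 \<le> k \<and> k \<le> i - 1 \<and> m (i-1) k = m (i-1+1) (k+1)}"
      using assms by (intro image_eqI[of _ _ "j - 1"]) auto
  qed (use assms in auto)
  then show ?thesis unfolding right_count_def by (simp add: card_image)
qed

lemma card_forced_NW_row:
  assumes "1 \<le> i"
  shows "card {j\<in>{1..i}. j + 1 \<le> i \<and> m i j = m (i-1) j} = left_count m (i-1)"
  unfolding left_count_def using assms by (intro arg_cong[where f = card]) auto

lemma special_left_right_count_sum:
  assumes M: "monotone_triangle n m" and "k < n"
  shows "special_count m k + left_count m k + right_count m k = k"
proof -
  have "card {j\<in>{1..k}. m (k+1) j < m k j \<and> m k j < m (k+1) (j+1)} + card {j\<in>{1..k}. m k j = m (k+1) j}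
      + card {j\<in>{1..k}. m k j = m (k+1) (j+1)} = card {1..k}"
  proof (rule card_partition3)
    fix j assume j: "j \<in> {1..k}"
    have "m (k+1) j \<le> m k j" "m k j \<le> m (k+1) (j+1)"
      using monotone_triangle_interlacing[OF M] j \<open>k < n\<close> by auto
    moreover have "m (k+1) j < m (k+1) (j+1)"
      using monotone_triangle_row_strict[OF M] j \<open>k < n\<close> by auto
    ultimately show "(m (k+1) j < m k j \<and> m k j < m (k+1) (j+1) \<or> m k j = m (k+1) j \<or> m k j = m (k+1) (j+1)) \<and>
      \<not> ((m (k+1) j < m k j \<and> m k j < m (k+1) (j+1)) \<and> m k j = m (k+1) j) \<and>
      \<not> ((m (k+1) j < m k j \<and> m k j < m (k+1) (j+1)) \<and> m k j = m (k+1) (j+1)) \<and>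
      \<not> (m k j = m (k+1) j \<and> m k j = m (k+1) (j+1))" by auto
  qed simp
  then show ?thesis
    unfolding special_count_def left_count_def right_count_def
    by (simp add: conj_assoc atLeastAtMost_iff)
qed

lemma prod_row_sum_allowed_arrow_weight:
  fixes u v w x :: "'a::field"
  assumes M: "monotone_triangle n m" and i: "1 \<le> i" "i \<le> n"
  shows "(\<Prod>j = 1..i. \<Sum>a\<in>allowed_arrows m i j. arrow_weight u v w x a)
       = (u * x) ^ right_count m (i-1) * (v * inverse x) ^ left_count m (i-1)
         * (u * x + v * inverse x + w) ^ (special_count m (i-1) + 1)"
proof -
  define P where "P j \<longleftrightarrow> 2 \<le> j \<and> m i j = m (i-1) (j-1)" for j
  define Q where "Q j \<longleftrightarrow> j + 1 \<le> i \<and> m i j = m (i-1) j" for j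
  have strict: "m (i-1) (j-1) < m (i-1) j" if "2 \<le> j" "j + 1 \<le> i" for j
    using monotone_triangle_row_strict[OF M, of "j-1" "i-1"] that i by simp
  have PQ: "\<not> (P j \<and> Q j)" for j
    using strict[of j] unfolding P_def Q_def by auto
  have "(\<Prod>j = 1..i. \<Sum>a\<in>allowed_arrows m i j. arrow_weight u v w x a)
      = (\<Prod>j = 1..i. if P j then u * x else if Q j then v * inverse x else u * x + v * inverse x + w)"
    unfolding P_def Q_def by (intro prod.cong refl sum_allowed_arrow_weight strict)
  also have "\<dots> = (u * x) ^ card {j\<in>{1..i}. P j} * (v * inverse x) ^ card {j\<in>{1..i}. Q j}
      * (u * x + v * inverse x + w) ^ card {j\<in>{1..i}. \<not> P j \<and> \<not> Q j}"
    using PQ by (intro prod_if3_eq_powers) auto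
  also have "card {j\<in>{1..i}. \<not> P j \<and> \<not> Q j} = special_count m (i-1) + 1"
  proof -
    have "card {j\<in>{1..i}. P j} + card {j\<in>{1..i}. Q j} + card {j\<in>{1..i}. \<not> P j \<and> \<not> Q j} = i"
      using PQ by (subst card_partition3) auto
    moreover have "special_count m (i-1) + left_count m (i-1) + right_count m (i-1) = i - 1"
      using i by (intro special_left_right_count_sum[OF M]) auto
    ultimately show ?thesis
      using card_forced_NE_row[OF i(1), of m] card_forced_NW_row[OF i(1), of m] i unfolding P_def Q_def by linarith
  qed
  finally show ?thesis
    using card_forced_NE_row[OF i(1), of m] card_forced_NW_row[OF i(1), of m] unfolding P_def Q_def by simp
qed

lemma W0_eq_prod_rows:
  fixes u v w :: "'a::field"
  assumes "\<forall>i\<in>{1..n}. X i \<noteq> 0"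
  shows "(\<Prod>i = 1..n. u * X i + v * inverse (X i) + w) * W0 u v w X n m
       = (\<Prod>i = 1..n. X i powi (row_sum m i - row_sum m (i-1)) *
            ((u * X i) ^ right_count m (i-1) * (v * inverse (X i)) ^ left_count m (i-1)
             * (u * X i + v * inverse (X i) + w) ^ (special_count m (i-1) + 1)))"
proof -
  let ?S = "\<lambda>i. u * X i + v * inverse (X i) + w"
  have zero: "right_count m 0 = 0" "left_count m 0 = 0"
    unfolding right_count_def left_count_def by simp_all
  have uv: "u ^ (\<Sum>i = 1..<n. right_count m i) = (\<Prod>i = 1..n. u ^ right_count m (i-1))"
       "v ^ (\<Sum>i = 1..<n. left_count m i) = (\<Prod>i = 1..n. v ^ left_count m (i-1))"
    by (simp_all only: power_sum sum_shift_pred[symmetric] zero)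
  have d_exp: "X i powi d_exp m i = X i powi (row_sum m i - row_sum m (i-1)) *
      (X i ^ right_count m (i-1) * inverse (X i) ^ left_count m (i-1))" if "i \<in> {1..n}" for i
    using assms that unfolding d_exp_def
    by (simp add: power_int_add power_int_diff divide_inverse power_inverse)
  have "(\<Prod>i = 1..n. ?S i) * W0 u v w X n m
      = (\<Prod>i = 1..n. ?S i * (u ^ right_count m (i-1) * (v ^ left_count m (i-1) *
           (X i powi d_exp m i * ?S i ^ special_count m (i-1)))))"
    unfolding W0_def uv prod.distrib by (simp add: mult_ac add_ac)
  also have "\<dots> = (\<Prod>i = 1..n. X i powi (row_sum m i - row_sum m (i-1)) *
            ((u * X i) ^ right_count m (i-1) * (v * inverse (X i)) ^ left_count m (i-1)
             * ?S i ^ (special_count m (i-1) + 1)))"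
    by (intro prod.cong refl) (simp add: d_exp power_mult_distrib mult_ac)
  finally show ?thesis .
qed

text \<open>The hypothesis that the bottom row is strictly increasing is already part of
  \<^const>\<open>monotone_triangle\<close>.\<close>

theorem mainTheorem7:
  fixes u v w :: "'a::field" and X :: "nat \<Rightarrow> 'a" and n :: nat and m :: "nat \<Rightarrow> nat \<Rightarrow> int"
  assumes "\<forall>i\<in>{1..n}. X i \<noteq> 0"
    and "monotone_triangle n m"
    and "\<forall>j. 1 \<le> j \<and> j < n \<longrightarrow> m n j < m n (j+1)"
  shows "(\<Sum>d\<in>arrowings n m. W u v w X n m d)
           = (\<Prod>i = 1..n. u * X i + v * inverse (X i) + w) * W0 u v w X n m"
proof -
  let ?C = "\<Prod>i = 1..n. X i powi (row_sum m i - row_sum m (i-1))"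
  have "(\<Sum>d\<in>arrowings n m. W u v w X n m d)
      = ?C * (\<Sum>d\<in>arrowings n m. \<Prod>(i, j)\<in>triangle_index n. arrow_weight u v w (X i) (d i j))"
    using W_eq_prod_arrow_weight[OF assms(1)] by (simp add: sum_distrib_left)
  also have "\<dots> = ?C * (\<Prod>i = 1..n. \<Prod>j = 1..i. \<Sum>a\<in>allowed_arrows m i j. arrow_weight u v w (X i) a)"
    unfolding sum_arrowings_prod[of "\<lambda>i j. arrow_weight u v w (X i)"]
    by (simp add: triangle_index_Sigma prod.Sigma)
  also have "\<dots> = (\<Prod>i = 1..n. X i powi (row_sum m i - row_sum m (i-1)) *
            ((u * X i) ^ right_count m (i-1) * (v * inverse (X i)) ^ left_count m (i-1)
             * (u * X i + v * inverse (X i) + w) ^ (special_count m (i-1) + 1)))"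
    unfolding prod.distrib[symmetric]
    by (intro prod.cong refl arg_cong2[where f = "(*)"] prod_row_sum_allowed_arrow_weight[OF assms(2)]) auto
  also have "\<dots> = (\<Prod>i = 1..n. u * X i + v * inverse (X i) + w) * W0 u v w X n m"
    using W0_eq_prod_rows[OF assms(1)] by simp
  finally show ?thesis .
qed

end
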